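(* For every $C>0$ there is a constant $C'>0$ depending only on $C$ such that the following holds. For every positive integer $n$, every $C$-dense $n$-element point set $P$ in the plane, and every stacking order $f$ of $\mathcal{D}(P)$, $$\lim_{\varepsilon\to 0}\mathrm{vis}(\mathcal{D}(\varepsilon P),f)\le C' n^{3/4},$$ where $f$ also denotes the corresponding stacking order of $\mathcal{D}(\varepsilon P)$.
   Context: For a point $p$ in the plane, $D(p)$ denotes the closed disk of radius $1$ centered at $p$, and for a finite point set $P$, $\mathcal{D}(P)=\{D(p): p\in P\}$. A stacking order of a finite collection $\mathcal{D}$ of $n$ distinct unit disks is a bijection $f:\mathcal{D}\to\{1,\dots,n\}$; $f(D)$ is regarded as the height of $D$, and the arrangement is viewed from below. A point $x$ on the boundary circle of $D\in\mathcal{D}$ is visible if $x$ does not lie in any disk $D'\in\mathcal{D}$ with $f(D')<f(D)$. The visible perimeter $\mathrm{vis}(\mathcal{D},f)$ is the total length of all visible boundary points, summed over all disks of $\mathcal{D}$. For $\varepsilon>0$, $\varepsilon P=\{(\varepsilon x,\varepsilon y): (x,y)\in P\}$, and a stacking order $f$ of $\mathcal{D}(P)$ is identified with the stacking order $D(\varepsilon p)\mapsto f(D(p))$ of $\mathcal{D}(\varepsilon P)$. An $n$-element point set $P$ is $C$-dense if $\max\{|pq|: p,q\in P\}\,/\,\min\{|pq|: p,q\in P,\ p\ne q\}\le C n^{1/2}$. *)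

theory Defs
  imports "HOL-Analysis.Analysis"
begin

text \<open>The unit disk D(p) is cball p 1,
its boundary circle is parametrised by t \<mapsto> p + cis t, t \<in> [0, 2 pi), so the
length of a set of boundary points is the Lebesgue measure of its set of angles.\<close>

definition unit_disk :: "complex \<Rightarrow> complex set" where
  "unit_disk p = cball p 1"

text \<open>A stacking order of D(P): a bijection from P (equivalently, from the disks,
since p \<mapsto> D(p) is injective) onto {1..n}.\<close>
definition stacking_order :: "complex set \<Rightarrow> (complex \<Rightarrow> nat) \<Rightarrow> bool" where
  "stacking_order P f \<longleftrightarrow> bij_betw f P {1..card P}"

definition visible_perimeter :: "complex set \<Rightarrow> (complex \<Rightarrow> nat) \<Rightarrow> real" where
  "visible_perimeter P f =
     (\<Sum>p\<in>P. measure lborel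
        {t \<in> {0..<2*pi}. \<forall>q\<in>P. f q < f p \<longrightarrow> p + cis t \<notin> unit_disk q})"

definition scale_set :: "real \<Rightarrow> complex set \<Rightarrow> complex set" where
  "scale_set \<epsilon> P = (\<lambda>p. complex_of_real \<epsilon> * p) ` P"

definition scale_order :: "real \<Rightarrow> (complex \<Rightarrow> nat) \<Rightarrow> (complex \<Rightarrow> nat)" where
  "scale_order \<epsilon> f = (\<lambda>x. f (x / complex_of_real \<epsilon>))"

text \<open>C-dense: max distance / min distance (over distinct pairs) \<le> C n^(1/2),
written out without division (for n = 1 this is vacuous).\<close>
definition C_dense :: "real \<Rightarrow> complex set \<Rightarrow> bool" where
  "C_dense C P \<longleftrightarrow>
     (\<forall>p\<in>P. \<forall>q\<in>P. \<forall>r\<in>P. \<forall>s\<in>P. r \<noteq> s \<longrightarrow>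
        dist p q \<le> C * sqrt (real (card P)) * dist r s)"

end

theory Submission
  imports Defs
begin

text \<open>As \<open>\<epsilon> \<rightarrow> 0\<close>, the boundary point \<open>\<epsilon>p + cis t\<close> of \<open>D(\<epsilon>p)\<close> escapes a lower disk
  \<open>D(\<epsilon>q)\<close> essentially iff \<open>(p - q) \<bullet> cis t \<ge> 0\<close>, so the limit of the visible perimeter is
  \<open>\<Sum>p. |G p|\<close>, where \<open>G p\<close> is the set of directions making a non-obtuse angle with every
  \<open>p - q\<close>, \<open>q\<close> lower than \<open>p\<close>; each \<open>G p\<close> is an intersection of half-circles.
  Fix \<open>\<beta> = n^(-1/4)\<close>. Directions \<open>t \<in> G p\<close> with \<open>t + \<beta> \<notin> G p\<close> lie within \<open>\<beta>\<close> of the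
  (at most two) endpoints of the arc \<open>G p\<close>, so they contribute at most \<open>4\<beta>n\<close> in total.
  If \<open>t\<close> and \<open>t + \<beta>\<close> both lie in \<open>G p\<close> and in \<open>G q\<close>, then the projections of \<open>p\<close> and
  \<open>q\<close> onto \<open>cis (t + \<beta>/2)\<close> differ by at least \<open>|p - q| sin (\<beta>/2)\<close>; by \<open>C\<close>-density only
  \<open>O(\<surd>n / \<beta>)\<close> points can share such a \<open>t\<close>. Altogether the limit is \<open>O(\<surd>n/\<beta> + \<beta>n) = O(n^(3/4))\<close>.\<close>

lemma inner_cis: "v \<bullet> cis t = Re v * cos t + Im v * sin t"
  by (simp add: inner_complex_def)

lemma abs_inner_cis_le: "\<bar>v \<bullet> cis t\<bar> \<le> norm v"
  using Cauchy_Schwarz_ineq2[of v "cis t"] by simp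

lemma sin_ge_half_self:
  fixes x :: real
  assumes "0 \<le> x" "x \<le> 1"
  shows "x / 2 \<le> sin x"
proof -
  have "\<bar>sin x - (\<Sum>m<3. sin_coeff m * x ^ m)\<bar> \<le> inverse (fact 3) * \<bar>x\<bar> ^ 3"
    by (rule Maclaurin_sin_bound)
  moreover have "(\<Sum>m<3. sin_coeff m * x ^ m) = x"
    by (simp add: eval_nat_numeral sin_coeff_def)
  ultimately have "\<bar>sin x - x\<bar> \<le> x^3 / 6"
    using assms by (simp add: eval_nat_numeral divide_simps)
  then have "x - sin x \<le> x^3 / 6" by linarith
  moreover have "x^3 \<le> x"
    using assms mult_left_le[of "x * x" x] by (simp add: power3_eq_cube mult_le_one)
  ultimately show ?thesis using assms by linarith
qed

text \<open>By the sine rule, \<open>sin s \<cdot> (v \<bullet> cis (a + b))\<close> is a nonnegative combination of the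
  values at the endpoints \<open>a\<close> and \<open>a + s\<close>.\<close>
lemma inner_cis_nonneg_between:
  assumes "0 \<le> v \<bullet> cis a" "0 \<le> v \<bullet> cis (a + s)" "0 \<le> b" "b \<le> s" "s < pi"
  shows "0 \<le> v \<bullet> cis (a + b)"
proof (cases "s = 0")
  case True
  then show ?thesis using assms by simp
next
  case False
  then have sin_s: "0 < sin s" using assms by (intro sin_gt_zero) auto
  have sin_s_eq: "sin s = sin (s - b) * cos b + cos (s - b) * sin b"
    by (metis sin_add diff_add_cancel)
  have cos_s_eq: "cos s = cos (s - b) * cos b - sin (s - b) * sin b"
    by (metis cos_add diff_add_cancel)
  have "sin s * (v \<bullet> cis (a + b)) = sin (s - b) * (v \<bullet> cis a) + sin b * (v \<bullet> cis (a + s))"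
    unfolding inner_cis cos_add sin_add sin_s_eq cos_s_eq
    using sin_cos_squared_add[of b] by algebra
  moreover have "0 \<le> sin (s - b)" "0 \<le> sin b" using assms by (auto intro: sin_ge_zero)
  ultimately have "0 \<le> sin s * (v \<bullet> cis (a + b))" using assms by simp
  then show ?thesis using sin_s by (simp add: zero_le_mult_iff)
qed

lemma inner_cis_midpoint_ge:
  assumes "0 \<le> v \<bullet> cis t" "0 \<le> v \<bullet> cis (t + \<beta>)" "0 < \<beta>" "\<beta> < pi"
  shows "norm v * sin (\<beta>/2) \<le> v \<bullet> cis (t + \<beta>/2)"
proof -
  define x where "x = t + \<beta>/2"
  define h where "h = \<beta>/2"
  define a where "a = v \<bullet> cis x"
  define b where "b = Im v * cos x - Re v * sin x"
  have t_eq: "t = x - h" and t\<beta>_eq: "t + \<beta> = x + h" by (auto simp: x_def h_def)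
  have left: "v \<bullet> cis t = cos h * a - sin h * b"
    unfolding t_eq a_def b_def inner_cis cos_diff sin_diff by (simp add: algebra_simps)
  have right: "v \<bullet> cis (t + \<beta>) = cos h * a + sin h * b"
    unfolding t\<beta>_eq a_def b_def inner_cis cos_add sin_add by (simp add: algebra_simps)
  have "a^2 + b^2 = (norm v)^2"
  proof -
    have "(sin x)^2 + (cos x)^2 = 1" by simp
    then show ?thesis unfolding a_def b_def inner_cis cmod_power2 by algebra
  qed
  have cos_h: "0 < cos h" and sin_h: "0 < sin h"
    using assms by (auto simp: h_def intro!: cos_gt_zero_pi sin_gt_zero)
  have "sin h * \<bar>b\<bar> \<le> cos h * a"
    using assms(1,2) left right sin_h by (cases "b \<ge> 0") auto
  moreover have "0 \<le> sin h * \<bar>b\<bar>" using sin_h by simp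
  ultimately have "0 \<le> cos h * a" and sq: "(sin h * \<bar>b\<bar>)^2 \<le> (cos h * a)^2"
    by (auto intro: power_mono)
  then have "0 \<le> a" using cos_h by (simp add: zero_le_mult_iff)
  have "(sin h)^2 * (a^2 + b^2) \<le> a^2"
    using sq
    by (simp add: power_mult_distrib cos_squared_eq algebra_simps)
  then have "(sin h * norm v)^2 \<le> a^2"
    using \<open>a^2 + b^2 = (norm v)^2\<close> by (simp add: power_mult_distrib)
  then show ?thesis
    using \<open>0 \<le> a\<close> power2_le_imp_le by (fastforce simp: a_def x_def h_def mult.commute)
qed

lemma card_le_diameter_div_separation:
  fixes X :: "real set"
  assumes "finite X" "\<delta> > 0" "D \<ge> 0"
    and sep: "\<And>x y. x \<in> X \<Longrightarrow> y \<in> X \<Longrightarrow> x \<noteq> y \<Longrightarrow> \<delta> \<le> \<bar>x - y\<bar>"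
    and diam: "\<And>x y. x \<in> X \<Longrightarrow> y \<in> X \<Longrightarrow> \<bar>x - y\<bar> \<le> D"
  shows "real (card X) \<le> D / \<delta> + 1"
proof (cases "X = {}")
  case True
  then show ?thesis using assms by simp
next
  case False
  define a where "a = Min X"
  have "a \<in> X" and a_le: "\<And>x. x \<in> X \<Longrightarrow> a \<le> x"
    using \<open>finite X\<close> False by (simp_all add: a_def)
  define g where "g x = nat \<lfloor>(x - a) / \<delta>\<rfloor>" for x
  define N where "N = nat \<lfloor>D / \<delta>\<rfloor>"
  have "inj_on g X"
  proof (rule inj_onI, rule ccontr)
    fix x y assume xy: "x \<in> X" "y \<in> X" "g x = g y" "x \<noteq> y"
    have "0 \<le> (x - a) / \<delta>" "0 \<le> (y - a) / \<delta>" using a_le xy \<open>\<delta> > 0\<close> by auto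
    then have "\<lfloor>(x - a) / \<delta>\<rfloor> = \<lfloor>(y - a) / \<delta>\<rfloor>" using xy(3) unfolding g_def
      by (metis eq_nat_nat_iff zero_le_floor)
    then have "\<bar>(x - a) / \<delta> - (y - a) / \<delta>\<bar> < 1" by linarith
    then have "\<bar>x - y\<bar> < \<delta>" using \<open>\<delta> > 0\<close> by (simp add: diff_divide_distrib[symmetric])
    with sep xy show False by force
  qed
  moreover have "g ` X \<subseteq> {0..N}"
  proof
    fix z assume "z \<in> g ` X"
    then obtain x where x: "x \<in> X" "z = g x" by auto
    have "x - a \<le> D" using diam[of x a] x \<open>a \<in> X\<close> a_le by force
    then have "\<lfloor>(x - a) / \<delta>\<rfloor> \<le> \<lfloor>D / \<delta>\<rfloor>" using \<open>\<delta> > 0\<close> by (intro floor_mono divide_right_mono) auto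
    then show "z \<in> {0..N}" unfolding x g_def N_def by (simp add: nat_mono)
  qed
  ultimately have "card X \<le> card {0..N}" by (metis card_image card_mono finite_atLeastAtMost)
  then have "real (card X) \<le> real N + 1" by simp
  also have "real N \<le> D / \<delta>" unfolding N_def using assms by simp
  finally show ?thesis by simp
qed

text \<open>The antipodal case is genuine: \<open>G\<close> may be a pair of opposite directions.\<close>
lemma exit_angle_gap:
  fixes G :: "real set"
  assumes per: "\<And>t. t \<in> G \<longleftrightarrow> t + 2*pi \<in> G"
    and conv: "\<And>a s b. a \<in> G \<Longrightarrow> a + s \<in> G \<Longrightarrow> 0 \<le> b \<Longrightarrow> b \<le> s \<Longrightarrow> s < pi \<Longrightarrow> a + b \<in> G"
    and u: "u \<in> G" "u + \<beta> \<notin> G" and t: "t \<in> G" "t + \<beta> \<notin> G"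
    and "u \<le> t" "0 < \<beta>"
  shows "t \<le> u + \<beta> \<or> t = u + pi \<or> u + 2*pi - \<beta> \<le> t"
proof (rule ccontr)
  assume gap: "\<not> ?thesis"
  show False
  proof (cases "t < u + pi")
    case True
    have "u + (t - u) \<in> G" using t by simp
    then have "u + \<beta> \<in> G" using conv[OF u(1), of "t - u" \<beta>] True gap \<open>0 < \<beta>\<close> by auto
    then show False using u by simp
  next
    case False
    have "t + (u + 2*pi - t) \<in> G" using per[of u] u by simp
    then have "t + \<beta> \<in> G"
      using conv[OF t(1), of "u + 2*pi - t" \<beta>] gap False \<open>0 < \<beta>\<close> by auto
    then show False using t by simp
  qed
qed

lemma measure_exit_angles_le:
  fixes G :: "real set"
  assumes per: "\<And>t. t \<in> G \<longleftrightarrow> t + 2*pi \<in> G"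
    and conv: "\<And>a s b. a \<in> G \<Longrightarrow> a + s \<in> G \<Longrightarrow> 0 \<le> b \<Longrightarrow> b \<le> s \<Longrightarrow> s < pi \<Longrightarrow> a + b \<in> G"
    and "0 < \<beta>"
  shows "measure lborel {t\<in>{0..<2*pi}. t \<in> G \<and> t + \<beta> \<notin> G} \<le> 4 * \<beta>"
proof -
  define E where "E = {t\<in>{0..<2*pi}. t \<in> G \<and> t + \<beta> \<notin> G}"
  have "measure lborel E \<le> 4 * \<beta>"
  proof (cases "E = {} \<or> E \<notin> sets lborel")
    case True
    then show ?thesis using \<open>0 < \<beta>\<close> by (auto simp: measure_notin_sets)
  next
    case False
    then obtain u where u: "u \<in> E" and E_sets: "E \<in> sets lborel" by blast
    define U where "U = {u-\<beta>..u+\<beta>} \<union> {u+2*pi-\<beta>..u+2*pi} \<union> {u-2*pi..u-2*pi+\<beta>} \<union> {u-pi, u+pi}"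
    have gap: "t \<le> u + \<beta> \<or> t = u + pi \<or> u + 2*pi - \<beta> \<le> t"
      if "t \<in> E" "u \<in> E" "u \<le> t" for t u
      using exit_angle_gap[OF per conv] that \<open>0 < \<beta>\<close> by (simp add: E_def)
    have "E \<subseteq> U"
    proof
      fix t assume t: "t \<in> E"
      have range: "0 \<le> t" "t < 2*pi" "0 \<le> u" "u < 2*pi" using t u by (auto simp: E_def)
      show "t \<in> U"
      proof (cases "u \<le> t")
        case True
        then consider "t \<le> u + \<beta>" | "t = u + pi" | "u + 2*pi - \<beta> \<le> t" using gap t u by blast
        then show ?thesis using True range unfolding U_def by cases auto
      next
        case False
        then consider "u \<le> t + \<beta>" | "u = t + pi" | "t + 2*pi - \<beta> \<le> u" using gap t u by fastforce
        then show ?thesis using False range unfolding U_def by cases auto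
      qed
    qed
    moreover have "U \<in> fmeasurable lborel"
      unfolding U_def by (intro fmeasurable.Un) (auto intro: fmeasurable_compact)
    ultimately have "measure lborel E \<le> measure lborel U"
      using E_sets by (intro measure_mono_fmeasurable) auto
    also have "\<dots> \<le> measure lborel {u-\<beta>..u+\<beta>} + measure lborel {u+2*pi-\<beta>..u+2*pi}
        + measure lborel {u-2*pi..u-2*pi+\<beta>} + measure lborel {u-pi, u+pi}"
      unfolding U_def by (intro measure_Un_le[THEN order_trans] add_right_mono) auto
    also have "\<dots> = 4 * \<beta>"
      using \<open>0 < \<beta>\<close> by (simp add: measure_def emeasure_lborel_countable)
    finally show ?thesis .
  qed
  then show ?thesis by (simp add: E_def)
qed

lemma sum_measure_le_of_card_le:
  fixes A :: "'i \<Rightarrow> 'a set"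
  assumes "finite I" "S \<in> fmeasurable M" "\<And>i. i \<in> I \<Longrightarrow> A i \<in> sets M"
    and card_le: "\<And>x. x \<in> S \<Longrightarrow> real (card {i\<in>I. x \<in> A i}) \<le> K"
  shows "(\<Sum>i\<in>I. measure M (S \<inter> A i)) \<le> K * measure M S"
proof -
  have S_int: "integrable M (indicator S :: 'a \<Rightarrow> real)"
    using assms(2) by (simp add: fmeasurable_def)
  have int: "integrable M (indicator (S \<inter> A i) :: 'a \<Rightarrow> real)" if "i \<in> I" for i
  proof -
    have "S \<inter> A i \<in> fmeasurable M"
      by (rule fmeasurableI2[OF assms(2)]) (use assms(2,3) that in auto)
    then show ?thesis by (auto simp: fmeasurable_def)
  qed
  have "(\<Sum>i\<in>I. measure M (S \<inter> A i)) = (\<integral>x. (\<Sum>i\<in>I. indicator (S \<inter> A i) x :: real) \<partial>M)"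
    using int assms(2,3) sets.sets_into_space
    by (auto simp: Bochner_Integration.integral_sum fmeasurable_def intro!: sum.cong)
  also have "\<dots> \<le> (\<integral>x. K * indicator S x \<partial>M)"
  proof (rule integral_mono)
    fix x
    have "(\<Sum>i\<in>I. indicator (S \<inter> A i) x :: real) = indicator S x * real (card {i\<in>I. x \<in> A i})"
      using assms(1) by (simp add: indicator_def of_bool_def sum.If_cases Int_def)
    then show "(\<Sum>i\<in>I. indicator (S \<inter> A i) x) \<le> K * indicator S x"
      using card_le[of x] by (auto simp: indicator_def)
  qed (use int S_int in auto)
  also have "\<dots> = K * measure M S"
    using assms(2) by (simp add: fmeasurable_def)
  finally show ?thesis .
qed

lemma fmeasurable_Ico: "{a..<b::real} \<in> fmeasurable lborel"
  by (rule fmeasurableI2[OF fmeasurable_compact[OF compact_Icc[of a b]]]) auto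

definition limit_visible_angles :: "complex set \<Rightarrow> (complex \<Rightarrow> nat) \<Rightarrow> complex \<Rightarrow> real set" where
  "limit_visible_angles P f p = {t. \<forall>q\<in>P. f q < f p \<longrightarrow> 0 \<le> (p - q) \<bullet> cis t}"

lemma limit_visible_angles_periodic:
  "t \<in> limit_visible_angles P f p \<longleftrightarrow> t + 2*pi \<in> limit_visible_angles P f p"
  by (simp add: limit_visible_angles_def inner_cis)

lemma limit_visible_angles_arc_convex:
  "a \<in> limit_visible_angles P f p \<Longrightarrow> a + s \<in> limit_visible_angles P f p \<Longrightarrow>
    0 \<le> b \<Longrightarrow> b \<le> s \<Longrightarrow> s < pi \<Longrightarrow> a + b \<in> limit_visible_angles P f p"
  unfolding limit_visible_angles_def using inner_cis_nonneg_between by blast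

lemma limit_visible_angles_borel: "finite P \<Longrightarrow> limit_visible_angles P f p \<in> sets borel"
proof -
  assume "finite P"
  have "limit_visible_angles P f p = {t\<in>space borel. \<forall>q\<in>P. f q < f p \<longrightarrow> 0 \<le> (p - q) \<bullet> cis t}"
    by (simp add: limit_visible_angles_def)
  also have "\<dots> \<in> sets borel"
    using \<open>finite P\<close> unfolding inner_cis by (intro sets.sets_Collect_finite_All) auto
  finally show ?thesis .
qed

lemma card_limit_visible_both_le:
  assumes "finite P" "inj_on f P" "d > 0"
    and sep: "\<And>r s. r \<in> P \<Longrightarrow> s \<in> P \<Longrightarrow> r \<noteq> s \<Longrightarrow> d \<le> norm (r - s)"
    and diam: "\<And>r s. r \<in> P \<Longrightarrow> s \<in> P \<Longrightarrow> norm (r - s) \<le> D" and "0 \<le> D"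
    and "0 < \<beta>" "\<beta> < pi"
  shows "real (card {p\<in>P. t \<in> limit_visible_angles P f p \<and> t + \<beta> \<in> limit_visible_angles P f p})
           \<le> D / (d * sin (\<beta>/2)) + 1"
proof -
  define Q where "Q = {p\<in>P. t \<in> limit_visible_angles P f p \<and> t + \<beta> \<in> limit_visible_angles P f p}"
  define h where "h p = p \<bullet> cis (t + \<beta>/2)" for p
  have sin_pos: "0 < sin (\<beta>/2)" using assms by (intro sin_gt_zero) auto
  have lower: "d * sin (\<beta>/2) \<le> h p - h q" if "p \<in> Q" "q \<in> Q" "f q < f p" for p q
  proof -
    have "0 \<le> (p - q) \<bullet> cis t" "0 \<le> (p - q) \<bullet> cis (t + \<beta>)"
      using that by (auto simp: Q_def limit_visible_angles_def)
    then have "norm (p - q) * sin (\<beta>/2) \<le> (p - q) \<bullet> cis (t + \<beta>/2)"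
      using assms by (intro inner_cis_midpoint_ge) auto
    moreover have "d * sin (\<beta>/2) \<le> norm (p - q) * sin (\<beta>/2)"
      using sep that sin_pos by (intro mult_right_mono) (auto simp: Q_def)
    ultimately show ?thesis by (simp add: h_def inner_diff_left)
  qed
  have separated: "d * sin (\<beta>/2) \<le> \<bar>h p - h q\<bar>" if "p \<in> Q" "q \<in> Q" "p \<noteq> q" for p q
  proof -
    have "f p \<noteq> f q" using that \<open>inj_on f P\<close> by (auto simp: Q_def inj_on_eq_iff)
    then show ?thesis using lower[OF that(1,2)] lower[OF that(2,1)] by (cases "f q < f p") auto
  qed
  then have "inj_on h Q"
    using \<open>d > 0\<close> sin_pos by (intro inj_onI) (smt (verit) mult_pos_pos)
  moreover have "real (card (h ` Q)) \<le> D / (d * sin (\<beta>/2)) + 1"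
  proof (rule card_le_diameter_div_separation)
    show "d * sin (\<beta>/2) \<le> \<bar>x - y\<bar>" if "x \<in> h ` Q" "y \<in> h ` Q" "x \<noteq> y" for x y
      using that separated by blast
    have "\<bar>h p - h q\<bar> \<le> D" if "p \<in> Q" "q \<in> Q" for p q
      using abs_inner_cis_le[of "p - q" "t + \<beta>/2"] diam[of p q] that
      by (auto simp: h_def inner_diff_left Q_def)
    then show "\<bar>x - y\<bar> \<le> D" if "x \<in> h ` Q" "y \<in> h ` Q" for x y
      using that by auto
  qed (use assms sin_pos in \<open>auto simp: Q_def\<close>)
  ultimately show ?thesis by (simp add: card_image Q_def)
qed

lemma sum_measure_limit_visible_angles_le:
  assumes "finite P" "inj_on f P" "d > 0"
    and sep: "\<And>r s. r \<in> P \<Longrightarrow> s \<in> P \<Longrightarrow> r \<noteq> s \<Longrightarrow> d \<le> norm (r - s)"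
    and diam: "\<And>r s. r \<in> P \<Longrightarrow> s \<in> P \<Longrightarrow> norm (r - s) \<le> D" and "0 \<le> D"
    and "0 < \<beta>" "\<beta> < pi"
  shows "(\<Sum>p\<in>P. measure lborel ({0..<2*pi} \<inter> limit_visible_angles P f p))
           \<le> 2*pi * (D / (d * sin (\<beta>/2)) + 1) + 4 * \<beta> * card P"
proof -
  let ?G = "limit_visible_angles P f"
  define A where "A p = ?G p \<inter> (\<lambda>t. t + \<beta>) -` ?G p" for p
  define E where "E p = {t\<in>{0..<2*pi}. t \<in> ?G p \<and> t + \<beta> \<notin> ?G p}" for p
  have G_sets: "?G p \<in> sets borel" for p
    using limit_visible_angles_borel[OF \<open>finite P\<close>] .
  have shift_sets: "(\<lambda>t. t + \<beta>) -` ?G p \<in> sets borel" for p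
    using measurable_sets_borel[of "\<lambda>t::real. t + \<beta>", OF _ G_sets] by auto
  have A_sets: "A p \<in> sets borel" for p
    using G_sets shift_sets by (auto simp: A_def)
  have "measure lborel ({0..<2*pi} \<inter> ?G p) \<le> measure lborel ({0..<2*pi} \<inter> A p) + 4 * \<beta>" for p
  proof -
    have E_eq: "E p = {0..<2*pi} \<inter> (?G p - (\<lambda>t. t + \<beta>) -` ?G p)" by (auto simp: E_def)
    have "{0..<2*pi} \<inter> ?G p \<subseteq> ({0..<2*pi} \<inter> A p) \<union> E p" by (auto simp: A_def E_def)
    moreover have "({0..<2*pi} \<inter> A p) \<union> E p \<in> fmeasurable lborel"
      by (rule fmeasurableI2[OF fmeasurable_compact[OF compact_Icc[of 0 "2*pi"]]])
        (use A_sets G_sets shift_sets in \<open>auto simp: E_eq\<close>)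
    ultimately have "measure lborel ({0..<2*pi} \<inter> ?G p)
        \<le> measure lborel (({0..<2*pi} \<inter> A p) \<union> E p)"
      using G_sets by (intro measure_mono_fmeasurable) auto
    also have "\<dots> \<le> measure lborel ({0..<2*pi} \<inter> A p) + measure lborel (E p)"
      using A_sets G_sets shift_sets by (intro measure_Un_le) (auto simp: E_eq)
    also have "measure lborel (E p) \<le> 4 * \<beta>"
      unfolding E_def using limit_visible_angles_periodic limit_visible_angles_arc_convex \<open>0 < \<beta>\<close>
      by (rule measure_exit_angles_le)
    finally show ?thesis by simp
  qed
  then have "(\<Sum>p\<in>P. measure lborel ({0..<2*pi} \<inter> ?G p))
      \<le> (\<Sum>p\<in>P. measure lborel ({0..<2*pi} \<inter> A p) + 4 * \<beta>)"
    by (rule sum_mono)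
  also have "\<dots> = (\<Sum>p\<in>P. measure lborel ({0..<2*pi} \<inter> A p)) + 4 * \<beta> * card P"
    by (simp add: sum.distrib)
  also have "(\<Sum>p\<in>P. measure lborel ({0..<2*pi} \<inter> A p)) \<le> (D / (d * sin (\<beta>/2)) + 1) * (2*pi)"
    using sum_measure_le_of_card_le[of P "{0..<2*pi}" lborel A "D / (d * sin (\<beta>/2)) + 1"]
      card_limit_visible_both_le[OF assms] A_sets \<open>finite P\<close> fmeasurable_Ico
    by (simp add: A_def)
  finally show ?thesis by (simp add: mult.commute)
qed

lemma C_dense_separation:
  assumes "finite P" "C_dense C P" "0 \<le> C"
  obtains d where "d > 0" "\<And>r s. r \<in> P \<Longrightarrow> s \<in> P \<Longrightarrow> r \<noteq> s \<Longrightarrow> d \<le> norm (r - s)"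
    "\<And>r s. r \<in> P \<Longrightarrow> s \<in> P \<Longrightarrow> norm (r - s) \<le> C * sqrt (card P) * d"
proof (cases "\<exists>r\<in>P. \<exists>s\<in>P. r \<noteq> s")
  case True
  define dists where "dists = (\<lambda>(r, s). norm (r - s)) ` {(r, s)\<in>P \<times> P. r \<noteq> s}"
  have "finite {(r, s)\<in>P \<times> P. r \<noteq> s}"
    using \<open>finite P\<close> by (auto intro: finite_subset[of _ "P \<times> P"])
  then have "finite dists" "dists \<noteq> {}" using True by (auto simp: dists_def)
  then obtain d where "d \<in> dists" and min: "\<And>x. x \<in> dists \<Longrightarrow> d \<le> x"
    using ex_min_if_finite not_le by metis
  then obtain r0 s0 where "r0 \<in> P" "s0 \<in> P" "r0 \<noteq> s0" "d = norm (r0 - s0)"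
    by (auto simp: dists_def)
  show ?thesis
  proof
    show "d > 0" using \<open>r0 \<noteq> s0\<close> \<open>d = norm (r0 - s0)\<close> by simp
    show "d \<le> norm (r - s)" if "r \<in> P" "s \<in> P" "r \<noteq> s" for r s
      using min that by (force simp: dists_def)
    show "norm (r - s) \<le> C * sqrt (card P) * d" if "r \<in> P" "s \<in> P" for r s
      using assms(2) that \<open>r0 \<in> P\<close> \<open>s0 \<in> P\<close> \<open>r0 \<noteq> s0\<close> \<open>d = norm (r0 - s0)\<close>
      by (auto simp: C_dense_def dist_norm)
  qed
next
  case False
  then have "norm (r - s) \<le> C * sqrt (card P) * 1" if "r \<in> P" "s \<in> P" for r s
    using that \<open>0 \<le> C\<close> by auto
  with False show ?thesis using that[of 1] by auto
qed

lemma sum_measure_limit_visible_angles_le_powr: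
  assumes "0 < C" "finite P" "P \<noteq> {}" "C_dense C P" "inj_on f P"
  shows "(\<Sum>p\<in>P. measure lborel ({0..<2*pi} \<inter> limit_visible_angles P f p))
           \<le> (8*pi*C + 2*pi + 4) * card P powr (3/4)"
proof -
  define n where "n = real (card P)"
  have "1 \<le> n" using assms(2,3) by (simp add: n_def Suc_le_eq card_gt_0_iff)
  obtain d where "d > 0" and sep: "\<And>r s. r \<in> P \<Longrightarrow> s \<in> P \<Longrightarrow> r \<noteq> s \<Longrightarrow> d \<le> norm (r - s)"
    and diam: "\<And>r s. r \<in> P \<Longrightarrow> s \<in> P \<Longrightarrow> norm (r - s) \<le> C * sqrt n * d"
    using C_dense_separation[OF assms(2,4)] assms(1) n_def by auto
  define \<beta> where "\<beta> = n powr (-1/4)"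
  have "0 < \<beta>" "\<beta> \<le> 1" using \<open>1 \<le> n\<close> powr_mono[of "-1/4" 0 n] by (auto simp: \<beta>_def)
  have "\<beta> < pi" using \<open>\<beta> \<le> 1\<close> pi_gt3 by linarith
  have sqrt_div_\<beta>: "sqrt n / \<beta> = n powr (3/4)"
    using \<open>1 \<le> n\<close> by (simp add: \<beta>_def powr_half_sqrt[symmetric] powr_diff[symmetric])
  have \<beta>_mult: "\<beta> * n = n powr (3/4)"
    using \<open>1 \<le> n\<close> powr_add[of n "-1/4" 1] by (simp add: \<beta>_def mult.assoc[symmetric])
  have "(\<Sum>p\<in>P. measure lborel ({0..<2*pi} \<inter> limit_visible_angles P f p))
      \<le> 2*pi * (C * sqrt n * d / (d * sin (\<beta>/2)) + 1) + 4 * \<beta> * n"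
    unfolding n_def
    by (rule sum_measure_limit_visible_angles_le)
      (use assms(2,5) \<open>d > 0\<close> sep diam \<open>0 < \<beta>\<close> \<open>\<beta> < pi\<close> \<open>0 < C\<close> in \<open>auto simp: n_def\<close>)
  also have "C * sqrt n * d / (d * sin (\<beta>/2)) = C * sqrt n / sin (\<beta>/2)"
    using \<open>d > 0\<close> by simp
  also have "\<dots> \<le> C * sqrt n / (\<beta>/4)"
    using \<open>0 < \<beta>\<close> \<open>\<beta> \<le> 1\<close> \<open>0 < C\<close> \<open>1 \<le> n\<close> sin_ge_half_self[of "\<beta>/2"]
    by (intro divide_left_mono) auto
  also have "\<dots> = 4 * C * (sqrt n / \<beta>)" by simp
  also have "\<dots> = 4 * C * n powr (3/4)" by (simp only: sqrt_div_\<beta>)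
  also have "2*pi * (4 * C * n powr (3/4) + 1) + 4 * \<beta> * n
      = 8*pi*C * n powr (3/4) + 2*pi + 4 * n powr (3/4)"
    by (simp add: algebra_simps \<beta>_mult[symmetric])
  also have "\<dots> \<le> (8*pi*C + 2*pi + 4) * n powr (3/4)"
    using \<open>1 \<le> n\<close> ge_one_powr_ge_zero[of n "3/4"] by (simp add: algebra_simps)
  finally show ?thesis by (simp add: n_def)
qed

lemma tendsto_measure_at_right_0:
  fixes A :: "real \<Rightarrow> 'a set"
  assumes "S \<in> fmeasurable M" "A0 \<in> sets M" "\<And>\<epsilon>. A \<epsilon> \<in> sets M" "\<And>\<epsilon>. A \<epsilon> \<subseteq> S"
    and eventually_eq: "\<And>x. \<forall>\<^sub>F \<epsilon> in at_right 0. x \<in> A \<epsilon> \<longleftrightarrow> x \<in> A0"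
  shows "((\<lambda>\<epsilon>. measure M (A \<epsilon>)) \<longlongrightarrow> measure M A0) (at_right 0)"
proof -
  have "((\<lambda>x. integral\<^sup>L M (indicator (A (inverse x)) :: 'a \<Rightarrow> real))
          \<longlongrightarrow> integral\<^sup>L M (indicator A0)) at_top"
  proof (rule integral_dominated_convergence_at_top[where w = "indicator S"])
    show "integrable M (indicator S :: 'a \<Rightarrow> real)"
      using assms(1) by (simp add: fmeasurable_def)
    show "AE x in M. ((\<lambda>t. indicator (A (inverse t)) x :: real) \<longlongrightarrow> indicator A0 x) at_top"
    proof (rule AE_I2)
      fix x
      have "\<forall>\<^sub>F t in at_top. x \<in> A (inverse t) \<longleftrightarrow> x \<in> A0"
        using filterlim_iff[THEN iffD1, OF filterlim_inverse_at_right_top] eventually_eq by blast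
      then show "((\<lambda>t. indicator (A (inverse t)) x :: real) \<longlongrightarrow> indicator A0 x) at_top"
        by (rule tendsto_eventually[OF eventually_mono]) (simp add: indicator_def)
    qed
    show "\<forall>\<^sub>F t in at_top. AE x in M. norm (indicator (A (inverse t)) x :: real) \<le> indicator S x"
    proof (intro always_eventually allI AE_I2)
      fix t x
      show "norm (indicator (A (inverse t)) x :: real) \<le> indicator S x"
        using assms(4)[of "inverse t"] by (auto simp: indicator_def)
    qed
  qed (use assms(2,3) in auto)
  then have "((\<lambda>x. measure M (A (inverse x))) \<longlongrightarrow> measure M A0) at_top"
    using assms(2,3) sets.sets_into_space by (simp add: Int_absorb2)
  then show ?thesis
    unfolding filterlim_at_top_to_right by simp
qed

definition scaled_visible_angles ::
    "complex set \<Rightarrow> (complex \<Rightarrow> nat) \<Rightarrow> real \<Rightarrow> complex \<Rightarrow> real set" where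
  "scaled_visible_angles P f \<epsilon> p =
     {t\<in>{0..<2*pi}. \<forall>q\<in>P. f q < f p \<longrightarrow> 0 < \<epsilon> * (norm (p - q))^2 + 2 * ((p - q) \<bullet> cis t)}"

lemma scaled_visible_angles_borel: "finite P \<Longrightarrow> scaled_visible_angles P f \<epsilon> p \<in> sets borel"
proof -
  assume "finite P"
  have "scaled_visible_angles P f \<epsilon> p = {0..<2*pi} \<inter>
      {t\<in>space borel. \<forall>q\<in>P. f q < f p \<longrightarrow> 0 < \<epsilon> * (norm (p - q))^2 + 2 * ((p - q) \<bullet> cis t)}"
    by (auto simp: scaled_visible_angles_def)
  also have "\<dots> \<in> sets borel"
    using \<open>finite P\<close> unfolding inner_cis by (intro sets.Int sets.sets_Collect_finite_All) auto
  finally show ?thesis .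
qed

lemma norm_scaled_add_cis_squared:
  "(norm (of_real \<epsilon> * v + cis t))^2 = \<epsilon>^2 * (norm v)^2 + 2 * \<epsilon> * (v \<bullet> cis t) + 1"
proof -
  have "(sin t)^2 + (cos t)^2 = 1" by simp
  then have "(\<epsilon> * Re v + cos t)^2 + (\<epsilon> * Im v + sin t)^2
      = \<epsilon>^2 * ((Re v)^2 + (Im v)^2) + 2 * \<epsilon> * (Re v * cos t + Im v * sin t) + 1"
    by algebra
  then show ?thesis unfolding cmod_power2 inner_cis by simp
qed

lemma scaled_boundary_point_notin_unit_disk_iff:
  assumes "\<epsilon> > 0"
  shows "of_real \<epsilon> * p + cis t \<notin> unit_disk (of_real \<epsilon> * q)
           \<longleftrightarrow> 0 < \<epsilon> * (norm (p - q))^2 + 2 * ((p - q) \<bullet> cis t)"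
proof -
  have "of_real \<epsilon> * p + cis t \<notin> unit_disk (of_real \<epsilon> * q)
      \<longleftrightarrow> 1 < norm (of_real \<epsilon> * (p - q) + cis t)"
    unfolding unit_disk_def mem_cball dist_norm not_le
    by (simp add: algebra_simps norm_minus_commute)
  also have "\<dots> \<longleftrightarrow> 1 < (norm (of_real \<epsilon> * (p - q) + cis t))^2"
    by (smt (verit) norm_ge_zero one_less_power power2_le_imp_le zero_less_numeral one_power2)
  also have "\<dots> \<longleftrightarrow> 0 < \<epsilon> * (\<epsilon> * (norm (p - q))^2 + 2 * ((p - q) \<bullet> cis t))"
    unfolding norm_scaled_add_cis_squared by (simp add: algebra_simps power2_eq_square)
  also have "\<dots> \<longleftrightarrow> 0 < \<epsilon> * (norm (p - q))^2 + 2 * ((p - q) \<bullet> cis t)"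
    using assms by (simp add: zero_less_mult_iff)
  finally show ?thesis .
qed

lemma visible_perimeter_scale_set:
  assumes "\<epsilon> > 0"
  shows "visible_perimeter (scale_set \<epsilon> P) (scale_order \<epsilon> f)
           = (\<Sum>p\<in>P. measure lborel (scaled_visible_angles P f \<epsilon> p))"
proof -
  define g where "g p = of_real \<epsilon> * p" for p :: complex
  have "inj_on g P" using assms by (auto simp: g_def inj_on_def)
  have height: "scale_order \<epsilon> f (of_real \<epsilon> * p) = f p" for p
    using assms by (simp add: scale_order_def)
  have "visible_perimeter (scale_set \<epsilon> P) (scale_order \<epsilon> f)
      = (\<Sum>p\<in>P. measure lborel {t \<in> {0..<2*pi}. \<forall>q\<in>P.
           scale_order \<epsilon> f (g q) < scale_order \<epsilon> f (g p) \<longrightarrow> g p + cis t \<notin> unit_disk (g q)})"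
    unfolding visible_perimeter_def scale_set_def g_def[symmetric]
    by (simp add: sum.reindex[OF \<open>inj_on g P\<close>])
  also have "\<dots> = (\<Sum>p\<in>P. measure lborel (scaled_visible_angles P f \<epsilon> p))"
    by (simp add: g_def height scaled_boundary_point_notin_unit_disk_iff[OF assms]
        scaled_visible_angles_def)
  finally show ?thesis .
qed

lemma tendsto_measure_scaled_visible_angles:
  assumes "finite P"
  shows "((\<lambda>\<epsilon>. measure lborel (scaled_visible_angles P f \<epsilon> p))
           \<longlongrightarrow> measure lborel ({0..<2*pi} \<inter> limit_visible_angles P f p)) (at_right 0)"
proof (rule tendsto_measure_at_right_0[OF fmeasurable_Ico])
  show "{0..<2*pi} \<inter> limit_visible_angles P f p \<in> sets lborel"
    using limit_visible_angles_borel[OF assms] by simp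
  show "scaled_visible_angles P f \<epsilon> p \<in> sets lborel" for \<epsilon>
    using scaled_visible_angles_borel[OF assms] by simp
  show "scaled_visible_angles P f \<epsilon> p \<subseteq> {0..<2*pi}" for \<epsilon>
    by (auto simp: scaled_visible_angles_def)
  fix t
  have "\<forall>\<^sub>F \<epsilon> in at_right 0. 0 < \<epsilon> * (norm (p - q))^2 + 2 * ((p - q) \<bullet> cis t)
          \<longleftrightarrow> 0 \<le> (p - q) \<bullet> cis t" if "q \<in> P" "f q < f p" for q
  proof (cases "0 \<le> (p - q) \<bullet> cis t")
    case True
    have "p \<noteq> q" using that by auto
    show ?thesis
      using eventually_at_right_less[of 0]
      by eventually_elim (use True \<open>p \<noteq> q\<close> in \<open>simp add: add_pos_nonneg\<close>)
  next
    case False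
    have "((\<lambda>\<epsilon>. \<epsilon> * (norm (p - q))^2) \<longlongrightarrow> 0) (at_right 0)"
      by (intro tendsto_mult_left_zero tendsto_ident_at)
    then have "\<forall>\<^sub>F \<epsilon> in at_right 0. \<epsilon> * (norm (p - q))^2 < -2 * ((p - q) \<bullet> cis t)"
      using False by (intro order_tendstoD(2)) auto
    then show ?thesis by eventually_elim (use False in auto)
  qed
  then have "\<forall>\<^sub>F \<epsilon> in at_right 0. \<forall>q\<in>{q\<in>P. f q < f p}.
          0 < \<epsilon> * (norm (p - q))^2 + 2 * ((p - q) \<bullet> cis t) \<longleftrightarrow> 0 \<le> (p - q) \<bullet> cis t"
    using assms by (intro eventually_ball_finite) auto
  then show "\<forall>\<^sub>F \<epsilon> in at_right 0. t \<in> scaled_visible_angles P f \<epsilon> p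
               \<longleftrightarrow> t \<in> {0..<2*pi} \<inter> limit_visible_angles P f p"
    by (rule eventually_mono) (auto simp: scaled_visible_angles_def limit_visible_angles_def)
qed

lemma tendsto_visible_perimeter_scale_set:
  assumes "finite P"
  shows "((\<lambda>\<epsilon>. visible_perimeter (scale_set \<epsilon> P) (scale_order \<epsilon> f))
           \<longlongrightarrow> (\<Sum>p\<in>P. measure lborel ({0..<2*pi} \<inter> limit_visible_angles P f p))) (at_right 0)"
proof (rule Lim_transform_eventually)
  show "((\<lambda>\<epsilon>. \<Sum>p\<in>P. measure lborel (scaled_visible_angles P f \<epsilon> p))
          \<longlongrightarrow> (\<Sum>p\<in>P. measure lborel ({0..<2*pi} \<inter> limit_visible_angles P f p))) (at_right 0)"
    using assms by (intro tendsto_sum tendsto_measure_scaled_visible_angles)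
  show "\<forall>\<^sub>F \<epsilon> in at_right 0. (\<Sum>p\<in>P. measure lborel (scaled_visible_angles P f \<epsilon> p))
          = visible_perimeter (scale_set \<epsilon> P) (scale_order \<epsilon> f)"
    using eventually_at_right_less[of 0] by eventually_elim (simp add: visible_perimeter_scale_set)
qed

theorem theorem2:
  fixes C :: real
  assumes "C > 0"
  shows "\<exists>C' > 0. \<forall>(n::nat) (P::complex set) (f::complex \<Rightarrow> nat).
           n > 0 \<and> finite P \<and> card P = n \<and> C_dense C P \<and> stacking_order P f \<longrightarrow>
           (\<exists>L. ((\<lambda>\<epsilon>. visible_perimeter (scale_set \<epsilon> P) (scale_order \<epsilon> f)) \<longlongrightarrow> L)
                   (at_right 0)
                \<and> L \<le> C' * real n powr (3/4))"
proof (intro exI conjI allI impI)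
  show "0 < 8*pi*C + 2*pi + 4" using assms by (simp add: add_pos_pos)
  fix n P f
  assume "n > 0 \<and> finite P \<and> card P = n \<and> C_dense C P \<and> stacking_order P f"
  then have "finite P" "P \<noteq> {}" "card P = n" "C_dense C P" "inj_on f P"
    by (auto simp: stacking_order_def bij_betw_def)
  then show "((\<lambda>\<epsilon>. visible_perimeter (scale_set \<epsilon> P) (scale_order \<epsilon> f))
               \<longlongrightarrow> (\<Sum>p\<in>P. measure lborel ({0..<2*pi} \<inter> limit_visible_angles P f p))) (at_right 0)"
    and "(\<Sum>p\<in>P. measure lborel ({0..<2*pi} \<inter> limit_visible_angles P f p))
           \<le> (8*pi*C + 2*pi + 4) * real n powr (3/4)"
    using tendsto_visible_perimeter_scale_set sum_measure_limit_visible_angles_le_powr[OF assms]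
    by auto
qed

end
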